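(* Let $\tau_{\bm{\lambda}}$ be a tableau of shape $\bm{\lambda}\vdash n$. Then $W_{\tau_{\bm{\lambda}}}$ is contained in the span of the polynomials $\textup{sym}_{\textup{hook}(\tau_{\bm{\lambda}})}(\mathsf{x}^m)$, as $\mathsf{x}^m$ ranges over the square-free monomials of degree at most $d$.
   Context: Fix positive integers $n,d$. $\mathbb{R}[\mathsf{x}]$ is the polynomial ring in variables $\mathsf{x}_{ij}$, $1\le i<j\le n$ ($\mathsf{x}_{ji}:=\mathsf{x}_{ij}$). $\mathbb{R}[\mathcal{V}_n]=\mathbb{R}[\mathsf{x}]/\mathcal{I}_n$, with $\mathcal{I}_n$ generated by all $\mathsf{x}_{ij}^2-\mathsf{x}_{ij}$, identified as a vector space with the square-free polynomials; $V=\mathbb{R}[\mathcal{V}_n]_{\le d}$ is the space of square-free polynomials of degree at most $d$. A square-free monomial is $\mathsf{x}^m=\prod_{i<j}\mathsf{x}_{ij}^{m_{ij}}$ with $m_{ij}\in\{0,1\}$. $\mathfrak{S}_n$ acts by ring automorphisms with $\mathfrak{s}\cdot\mathsf{x}_{ij}=\mathsf{x}_{\mathfrak{s}(i)\mathfrak{s}(j)}$. $V=\bigoplus_{\bm{\lambda}}V_{\bm{\lambda}}$ is the isotypic decomposition ($V_{\bm{\lambda}}$ = span of all submodules isomorphic to the irreducible $S_{\bm{\lambda}}$). A tableau of shape $\bm{\lambda}=(\lambda_1,\lambda_2,\dots)$ is a bijective filling of the Young diagram of $\bm{\lambda}$ with $1,\dots,n$; the row group $\mathfrak{R}_\tau$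 of a tableau $\tau$ is the subgroup of $\mathfrak{S}_n$ preserving the label set of each row. $W_{\tau_{\bm{\lambda}}}:=V_{\bm{\lambda}}^{\mathfrak{R}_{\tau_{\bm{\lambda}}}}$, the elements of $V_{\bm{\lambda}}$ fixed by $\mathfrak{R}_{\tau_{\bm{\lambda}}}$. For a tableau $\tau$, $\textup{sym}_\tau(\mathsf{f}):=\frac1{|\mathfrak{R}_\tau|}\sum_{\mathfrak{s}\in\mathfrak{R}_\tau}\mathfrak{s}\cdot\mathsf{f}$. $\textup{hook}(\tau_{\bm{\lambda}})$ is the tableau of hook shape $(\lambda_1,1^{n-\lambda_1})$ whose first row equals the first row of $\tau_{\bm{\lambda}}$ and whose remaining labels are placed in the tail (first column below the first row) in increasing order. *)

theory Defs
  imports Complex_Main "HOL-Combinatorics.Permutations"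
begin

definition fspan :: "('a \<Rightarrow> real) set \<Rightarrow> ('a \<Rightarrow> real) set" where
  "fspan S = {f. \<exists>A c. finite A \<and> A \<subseteq> S \<and> f = (\<lambda>x. \<Sum>a\<in>A. c a * a x)}"

definition fsubspace :: "('a \<Rightarrow> real) set \<Rightarrow> bool" where
  "fsubspace U \<longleftrightarrow> (\<lambda>_. 0) \<in> U \<and>
     (\<forall>u\<in>U. \<forall>w\<in>U. \<forall>a b. (\<lambda>x. a * u x + b * w x) \<in> U)"

definition flinear_on :: "('a \<Rightarrow> real) set \<Rightarrow> (('a \<Rightarrow> real) \<Rightarrow> ('b \<Rightarrow> real)) \<Rightarrow> bool" where
  "flinear_on U \<phi> \<longleftrightarrow> (\<forall>u\<in>U. \<forall>w\<in>U. \<forall>a b.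
      \<phi> (\<lambda>x. a * u x + b * w x) = (\<lambda>y. a * \<phi> u y + b * \<phi> w y))"

text \<open>Variables x_ij (1 \<le> i < j \<le> n) are indexed by the 2-subsets {i,j} of {1..n}.
 A square-free monomial x^m is identified with the set of variables it contains,
 and a square-free polynomial with its coefficient function on monomials.\<close>

definition edges :: "nat \<Rightarrow> nat set set" where
  "edges n = {{i, j} | i j. 1 \<le> i \<and> i < j \<and> j \<le> n}"

definition monomials_le :: "nat \<Rightarrow> nat \<Rightarrow> nat set set set" where
  "monomials_le n d = {m. m \<subseteq> edges n \<and> card m \<le> d}"

definition Vspace :: "nat \<Rightarrow> nat \<Rightarrow> (nat set set \<Rightarrow> real) set" where
  "Vspace n d = {f. \<forall>m. f m \<noteq> 0 \<longrightarrow> m \<in> monomials_le n d}"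

definition monom :: "nat set set \<Rightarrow> (nat set set \<Rightarrow> real)" where
  "monom m = (\<lambda>m'. if m' = m then 1 else 0)"

text \<open>Action: s . x_ij = x_{s(i) s(j)}, so s . x^m = x^{s(m)} and the coefficient of
 s . f at N is the coefficient of f at s^{-1}(N).\<close>
definition actP :: "(nat \<Rightarrow> nat) \<Rightarrow> (nat set set \<Rightarrow> real) \<Rightarrow> (nat set set \<Rightarrow> real)" where
  "actP s f = (\<lambda>N. f ((\<lambda>e. inv s ` e) ` N))"

definition Sym :: "nat \<Rightarrow> (nat \<Rightarrow> nat) set" where
  "Sym n = {s. s permutes {1..n}}"

definition is_partition :: "nat list \<Rightarrow> nat \<Rightarrow> bool" where
  "is_partition lam n \<longleftrightarrow> sorted (rev lam) \<and> (\<forall>k\<in>set lam. 0 < k) \<and> sum_list lam = n"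

definition cells :: "nat list \<Rightarrow> (nat \<times> nat) set" where
  "cells lam = {(i, j). i < length lam \<and> j < lam ! i}"

text \<open>A tableau of shape lam: bijective filling of the Young diagram with 1..n
 (cell (i,j) = row i, column j, 0-based).\<close>
definition tableau :: "nat \<Rightarrow> nat list \<Rightarrow> (nat \<times> nat \<Rightarrow> nat) \<Rightarrow> bool" where
  "tableau n lam T \<longleftrightarrow> bij_betw T (cells lam) {1..n}"

definition row_set :: "nat list \<Rightarrow> (nat \<times> nat \<Rightarrow> nat) \<Rightarrow> nat \<Rightarrow> nat set" where
  "row_set lam T i = T ` {c \<in> cells lam. fst c = i}"

definition col_set :: "nat list \<Rightarrow> (nat \<times> nat \<Rightarrow> nat) \<Rightarrow> nat \<Rightarrow> nat set" where
  "col_set lam T j = T ` {c \<in> cells lam. snd c = j}"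

definition row_group :: "nat \<Rightarrow> nat list \<Rightarrow> (nat \<times> nat \<Rightarrow> nat) \<Rightarrow> (nat \<Rightarrow> nat) set" where
  "row_group n lam T = {s \<in> Sym n. \<forall>i. s ` row_set lam T i = row_set lam T i}"

definition col_group :: "nat \<Rightarrow> nat list \<Rightarrow> (nat \<times> nat \<Rightarrow> nat) \<Rightarrow> (nat \<Rightarrow> nat) set" where
  "col_group n lam T = {s \<in> Sym n. \<forall>j. s ` col_set lam T j = col_set lam T j}"

definition sym_tab :: "nat \<Rightarrow> nat list \<Rightarrow> (nat \<times> nat \<Rightarrow> nat)
    \<Rightarrow> (nat set set \<Rightarrow> real) \<Rightarrow> (nat set set \<Rightarrow> real)" where
  "sym_tab n lam T f = (\<lambda>N. (1 / real (card (row_group n lam T))) *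
       (\<Sum>s\<in>row_group n lam T. actP s f N))"

definition hook_shape :: "nat \<Rightarrow> nat list \<Rightarrow> nat list" where
  "hook_shape n lam = lam ! 0 # replicate (n - lam ! 0) 1"

definition hook_tab :: "nat \<Rightarrow> nat list \<Rightarrow> (nat \<times> nat \<Rightarrow> nat) \<Rightarrow> (nat \<times> nat \<Rightarrow> nat)" where
  "hook_tab n lam T = (\<lambda>(i, j).
     if i = 0 then T (0, j)
     else if j = 0 then sorted_list_of_set ({1..n} - row_set lam T 0) ! (i - 1)
     else 0)"

text \<open>Tabloids of shape lam are represented by row assignments r : {1..n} \<rightarrow> rows
 (extended by 0 outside {1..n}); M^lam is the space of real functions on tabloids.\<close>
definition tabloids :: "nat \<Rightarrow> nat list \<Rightarrow> (nat \<Rightarrow> nat) set" where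
  "tabloids n lam = {r. (\<forall>v. v \<notin> {1..n} \<longrightarrow> r v = 0) \<and> (\<forall>v\<in>{1..n}. r v < length lam)
      \<and> (\<forall>k<length lam. card {v\<in>{1..n}. r v = k} = lam ! k)}"

definition tabloid_of :: "nat \<Rightarrow> nat list \<Rightarrow> (nat \<times> nat \<Rightarrow> nat) \<Rightarrow> (nat \<Rightarrow> nat)" where
  "tabloid_of n lam T = (\<lambda>v. if v \<in> {1..n} then (THE i. v \<in> row_set lam T i) else 0)"

text \<open>Action on M^lam: s . {t} = {s t}.\<close>
definition actM :: "(nat \<Rightarrow> nat) \<Rightarrow> ((nat \<Rightarrow> nat) \<Rightarrow> real) \<Rightarrow> ((nat \<Rightarrow> nat) \<Rightarrow> real)" where
  "actM s g = (\<lambda>r. g (r \<circ> s))"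

definition polytabloid :: "nat \<Rightarrow> nat list \<Rightarrow> (nat \<times> nat \<Rightarrow> nat) \<Rightarrow> ((nat \<Rightarrow> nat) \<Rightarrow> real)" where
  "polytabloid n lam T = (\<lambda>r. \<Sum>s\<in>col_group n lam T.
      of_int (sign s) * (if r = tabloid_of n lam (s \<circ> T) then 1 else 0))"

definition specht :: "nat \<Rightarrow> nat list \<Rightarrow> ((nat \<Rightarrow> nat) \<Rightarrow> real) set" where
  "specht n lam = fspan {polytabloid n lam T | T. tableau n lam T}"

definition submodule :: "nat \<Rightarrow> nat \<Rightarrow> (nat set set \<Rightarrow> real) set \<Rightarrow> bool" where
  "submodule n d U \<longleftrightarrow> U \<subseteq> Vspace n d \<and> fsubspace U \<and> (\<forall>s\<in>Sym n. \<forall>u\<in>U. actP s u \<in> U)"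

definition iso_to_specht :: "nat \<Rightarrow> nat list \<Rightarrow> (nat set set \<Rightarrow> real) set \<Rightarrow> bool" where
  "iso_to_specht n lam U \<longleftrightarrow> (\<exists>\<phi>. bij_betw \<phi> U (specht n lam) \<and> flinear_on U \<phi>
      \<and> (\<forall>s\<in>Sym n. \<forall>u\<in>U. \<phi> (actP s u) = actM s (\<phi> u)))"

definition isotypic :: "nat \<Rightarrow> nat \<Rightarrow> nat list \<Rightarrow> (nat set set \<Rightarrow> real) set" where
  "isotypic n d lam = fspan (\<Union> {U. submodule n d U \<and> iso_to_specht n lam U})"

definition W_tab :: "nat \<Rightarrow> nat \<Rightarrow> nat list \<Rightarrow> (nat \<times> nat \<Rightarrow> nat) \<Rightarrow> (nat set set \<Rightarrow> real) set" where
  "W_tab n d lam T = {f \<in> isotypic n d lam. \<forall>s\<in>row_group n lam T. actP s f = f}"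

end

theory Submission
  imports Defs
begin

text \<open>Every row of the hook tableau other than the first is a single label outside the first
 row of the original tableau, so the row group of the hook tableau is contained in that of the
 original one. Hence every f in W_tab is fixed by the hook symmetrisation, which is linear, and
 expanding f in square-free monomials of degree at most d gives
 f = sym_hook f = sum over m of f(m) sym_hook(x^m).\<close>

lemma sum_in_fspan_image:
  assumes "finite M"
  shows "(\<lambda>x. \<Sum>m\<in>M. c m * g m x) \<in> fspan (g ` M)"
proof -
  define c' where "c' a = (\<Sum>m\<in>{m\<in>M. g m = a}. c m)" for a
  have "(\<Sum>m\<in>M. c m * g m x) = (\<Sum>a\<in>g ` M. c' a * a x)" for x
  proof -
    have "(\<Sum>m\<in>M. c m * g m x) = (\<Sum>a\<in>g ` M. \<Sum>m\<in>{m\<in>M. g m = a}. c m * g m x)"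
      using sum.image_gen[OF assms, of "\<lambda>m. c m * g m x" g] by simp
    also have "\<dots> = (\<Sum>a\<in>g ` M. c' a * a x)"
      unfolding c'_def sum_distrib_right by (intro sum.cong refl) auto
    finally show ?thesis .
  qed
  then show ?thesis unfolding fspan_def using assms by blast
qed

lemma finite_monomials_le: "finite (monomials_le n d)"
proof -
  have "edges n \<subseteq> Pow {1..n}" unfolding edges_def by auto
  then have "finite (edges n)" by (rule finite_subset) simp
  then show ?thesis unfolding monomials_le_def
    by (rule finite_subset[rotated, OF finite_Pow_iff[THEN iffD2]]) auto
qed

lemma isotypic_subset_Vspace: "isotypic n d lam \<subseteq> Vspace n d"
proof
  fix f assume "f \<in> isotypic n d lam"
  then obtain A c where A: "finite A" "A \<subseteq> \<Union> {U. submodule n d U \<and> iso_to_specht n lam U}"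
    and f: "f = (\<lambda>x. \<Sum>a\<in>A. c a * a x)"
    unfolding isotypic_def fspan_def by blast
  have AV: "A \<subseteq> Vspace n d" using A(2) unfolding submodule_def by blast
  show "f \<in> Vspace n d" unfolding Vspace_def
  proof (intro CollectI allI impI)
    fix m assume "f m \<noteq> 0"
    then obtain a where "a \<in> A" "a m \<noteq> 0" unfolding f
      by (metis (mono_tags, lifting) mult_zero_right sum.neutral)
    then show "m \<in> monomials_le n d" using AV unfolding Vspace_def by blast
  qed
qed

lemma Vspace_monom_expansion:
  assumes "f \<in> Vspace n d"
  shows "f = (\<lambda>y. \<Sum>m\<in>monomials_le n d. f m * monom m y)"
proof
  fix y
  show "f y = (\<Sum>m\<in>monomials_le n d. f m * monom m y)"
  proof (cases "y \<in> monomials_le n d")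
    case True
    have "(\<Sum>m\<in>monomials_le n d. f m * monom m y)
        = (\<Sum>m\<in>monomials_le n d. if y = m then f m else 0)"
      unfolding monom_def by (intro sum.cong) auto
    also have "\<dots> = f y" using True by (simp add: finite_monomials_le)
    finally show ?thesis by simp
  next
    case False
    then have "f y = 0" using assms unfolding Vspace_def by blast
    moreover have "(\<Sum>m\<in>monomials_le n d. f m * monom m y) = 0"
      using False unfolding monom_def by (intro sum.neutral) auto
    ultimately show ?thesis by simp
  qed
qed

lemma finite_row_group: "finite (row_group n lam T)"
  by (rule finite_subset[of _ "{s. s permutes {1..n}}"])
    (auto simp: row_group_def Sym_def finite_permutations)

lemma id_in_row_group: "id \<in> row_group n lam T"
  by (simp add: row_group_def Sym_def)

lemma sym_tab_sum:
  "sym_tab n lam T (\<lambda>y. \<Sum>m\<in>M. c m * g m y) = (\<lambda>y. \<Sum>m\<in>M. c m * sym_tab n lam T (g m) y)"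
  unfolding sym_tab_def actP_def
  by (simp add: sum_distrib_left sum.swap[of _ M] algebra_simps)

lemma sym_tab_fixed:
  assumes "\<And>s. s \<in> row_group n lam T \<Longrightarrow> actP s f = f"
  shows "sym_tab n lam T f = f"
proof -
  have "card (row_group n lam T) > 0"
    using finite_row_group id_in_row_group card_gt_0_iff by blast
  then show ?thesis unfolding sym_tab_def by (simp add: assms)
qed

lemma tableau_row_set_subset:
  assumes "tableau n lam T"
  shows "row_set lam T i \<subseteq> {1..n}"
  using assms unfolding tableau_def row_set_def bij_betw_def by auto

lemma tableau_row_sets_disjoint:
  assumes "tableau n lam T" and "i \<noteq> k"
  shows "row_set lam T i \<inter> row_set lam T k = {}"
  using assms bij_betw_imp_inj_on[of T] unfolding tableau_def row_set_def
  by (auto dest: inj_onD)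

lemma card_row_set_0:
  assumes "tableau n lam T" and "lam \<noteq> []"
  shows "card (row_set lam T 0) = lam ! 0"
proof -
  have row0: "{c \<in> cells lam. fst c = 0} = Pair 0 ` {..<lam ! 0}"
    using assms(2) unfolding cells_def by auto
  have "inj_on T (cells lam)"
    using assms(1) unfolding tableau_def by (rule bij_betw_imp_inj_on)
  then have "card (row_set lam T 0) = card {c \<in> cells lam. fst c = 0}"
    unfolding row_set_def by (rule card_image[OF inj_on_subset]) auto
  also have "\<dots> = lam ! 0" unfolding row0 by (subst card_image) (auto simp: inj_on_def)
  finally show ?thesis .
qed

lemma row_set_hook_tab_0:
  assumes "lam \<noteq> []"
  shows "row_set (hook_shape n lam) (hook_tab n lam T) 0 = row_set lam T 0"
proof -
  have "{c \<in> cells (hook_shape n lam). fst c = 0} = Pair 0 ` {..<lam ! 0}"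
    "{c \<in> cells lam. fst c = 0} = Pair 0 ` {..<lam ! 0}"
    using assms unfolding cells_def hook_shape_def by auto
  then show ?thesis unfolding row_set_def hook_tab_def by (simp add: image_image)
qed

lemma row_set_hook_tab_Suc:
  assumes "k < n - lam ! 0"
  shows "row_set (hook_shape n lam) (hook_tab n lam T) (Suc k)
           = {sorted_list_of_set ({1..n} - row_set lam T 0) ! k}"
proof -
  have "{c \<in> cells (hook_shape n lam). fst c = Suc k} = {(Suc k, 0)}"
    using assms unfolding cells_def hook_shape_def by auto
  then show ?thesis unfolding row_set_def hook_tab_def by simp
qed

lemma row_group_hook_tab_subset:
  assumes "is_partition lam n" and "0 < n" and "tableau n lam T"
  shows "row_group n (hook_shape n lam) (hook_tab n lam T) \<subseteq> row_group n lam T"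
proof
  fix s assume s: "s \<in> row_group n (hook_shape n lam) (hook_tab n lam T)"
  define R0 where "R0 = row_set lam T 0"
  define L where "L = sorted_list_of_set ({1..n} - R0)"
  have lam: "lam \<noteq> []" using assms(1,2) unfolding is_partition_def by auto
  have R0: "R0 \<subseteq> {1..n}" "card R0 = lam ! 0"
    unfolding R0_def using tableau_row_set_subset card_row_set_0 assms(3) lam by auto
  have length_L: "length L = n - lam ! 0"
    unfolding L_def using R0 by (simp add: card_Diff_subset finite_subset)
  have s_rows: "s ` row_set (hook_shape n lam) (hook_tab n lam T) i
      = row_set (hook_shape n lam) (hook_tab n lam T) i" for i
    using s unfolding row_group_def by auto
  have s_fixes: "s v = v" if "v \<in> {1..n} - R0" for v
  proof -
    have "v \<in> set L" unfolding L_def using that by simp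
    then obtain k where "k < length L" "L ! k = v" by (metis in_set_conv_nth)
    then show ?thesis
      using s_rows[of "Suc k"] row_set_hook_tab_Suc[of k n lam T] length_L
      unfolding L_def R0_def by simp
  qed
  have "s ` row_set lam T i = row_set lam T i" for i
  proof (cases "i = 0")
    case True
    then show ?thesis using s_rows[of 0] row_set_hook_tab_0[OF lam] by simp
  next
    case False
    then have "row_set lam T i \<subseteq> {1..n} - R0"
      using tableau_row_set_subset[OF assms(3)] tableau_row_sets_disjoint[OF assms(3) False]
      unfolding R0_def by blast
    then show ?thesis using s_fixes by (simp add: subset_iff image_cong)
  qed
  then show "s \<in> row_group n lam T" using s unfolding row_group_def by simp
qed

theorem lemma3p2:
  fixes n d :: nat and lam :: "nat list" and T :: "nat \<times> nat \<Rightarrow> nat"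
  assumes "0 < n" and "0 < d"
    and "is_partition lam n"
    and "tableau n lam T"
  shows "W_tab n d lam T \<subseteq>
           fspan ((\<lambda>m. sym_tab n (hook_shape n lam) (hook_tab n lam T) (monom m)) ` monomials_le n d)"
proof
  fix f assume f: "f \<in> W_tab n d lam T"
  let ?sym = "sym_tab n (hook_shape n lam) (hook_tab n lam T)"
  have "f \<in> Vspace n d" using f isotypic_subset_Vspace unfolding W_tab_def by blast
  then have expansion: "f = (\<lambda>y. \<Sum>m\<in>monomials_le n d. f m * monom m y)"
    by (rule Vspace_monom_expansion)
  have "?sym f = f"
    using f row_group_hook_tab_subset[OF assms(3,1,4)] unfolding W_tab_def
    by (intro sym_tab_fixed) blast
  also have "?sym f = (\<lambda>y. \<Sum>m\<in>monomials_le n d. f m * ?sym (monom m) y)"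
    by (subst expansion) (rule sym_tab_sum)
  finally have "f = \<dots>" by simp
  also have "\<dots> \<in> fspan ((\<lambda>m. ?sym (monom m)) ` monomials_le n d)"
    by (rule sum_in_fspan_image[OF finite_monomials_le])
  finally show "f \<in> fspan ((\<lambda>m. ?sym (monom m)) ` monomials_le n d)" .
qed

end
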